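(* For all positive integers $\alpha,\beta,p$, $C(\alpha,\beta,p)\leq C_{2D}(\alpha,\beta,p)$.
   Context: Memory cells are binary; there are $n$ cells and cell-state vectors lie in $\{0,1\}^n$. For a real $R\ge 0$ write $[1:2^{nR}]=\{1,2,\ldots,\lfloor 2^{nR}\rfloor\}$. A code on $n$ cells consists, for each write $i\ge 1$, of a real $R_i\ge 0$ (the individual rate), an encoder $\mathcal{E}_i:[1:2^{nR_i}]\times\{0,1\}^n\to\{0,1\}^n$ and a decoder $\mathcal{D}_i:\{0,1\}^n\to[1:2^{nR_i}]$ with $\mathcal{D}_i(\mathcal{E}_i(m,\mathbf{u}))=m$ for all $m,\mathbf{u}$ (the encoder and decoder may depend on the write index $i$). Starting from the all-zero state $\mathbf{v}_0=\mathbf{0}$, a message sequence $m_1,m_2,\ldots$ produces states $\mathbf{v}_i=\mathcal{E}_i(m_i,\mathbf{v}_{i-1})=(v_{i,1},\ldots,v_{i,n})$. The rewrite cost of a write is the Hamming distance between consecutive states. For positive integers $\alpha,\beta,p$, the code is $(\alpha,\beta,p)$-constrained if for every message sequence, every $i\ge 0$ and every $1\le j\le n-\beta+1$, $$\big|\{(k,\ell): v_{i+k,j+\ell}\neq v_{i+k+1,j+\ell},\ 0\le k<\alpha,\ 0\le \ell<\beta\}\big|\le p,$$ i.e. over any $\alpha$ consecutive rewrites and any $\beta$ contiguous cells the total rewrite cost is at most $p$. The rate of the code is $R=\lim_{m\to\infty}\frac1m\sum_{i=1}^m R_i$. $C_n(\alpha,\beta,p)$ is the supremum of rates of $(\alpha,\beta,p)$-constrained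 codes on $n$ cells, and the $(\alpha,\beta,p)$-capacity is $C(\alpha,\beta,p)=\lim_{n\to\infty}C_n(\alpha,\beta,p)$. An $m\times n$ binary array is an $(a,b,p)$-array if every $a\times b$ sub-array formed by $a$ consecutive rows and $b$ consecutive columns contains at most $p$ ones. If $c(m,n)$ is the number of $m\times n$ $(a,b,p)$-arrays, then $C_{2D}(a,b,p)=\lim_{m,n\to\infty}\frac{\log_2 c(m,n)}{mn}$. *)

theory Defs
  imports "HOL-Analysis.Analysis"
begin

(* Cells are indexed 0..n-1 (the paper uses 1..n); states are bool lists of length n. *)

definition msgs :: "nat \<Rightarrow> real \<Rightarrow> nat set" where
  "msgs n R = {1 .. nat \<lfloor>2 powr (real n * R)\<rfloor>}"

primrec states :: "nat \<Rightarrow> (nat \<Rightarrow> nat \<Rightarrow> bool list \<Rightarrow> bool list) \<Rightarrow> (nat \<Rightarrow> nat) \<Rightarrow> nat \<Rightarrow> bool list" where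
  "states n E ms 0 = replicate n False"
| "states n E ms (Suc i) = E (Suc i) (ms (Suc i)) (states n E ms i)"

definition is_code :: "nat \<Rightarrow> (nat \<Rightarrow> real) \<Rightarrow> (nat \<Rightarrow> nat \<Rightarrow> bool list \<Rightarrow> bool list)
    \<Rightarrow> (nat \<Rightarrow> bool list \<Rightarrow> nat) \<Rightarrow> bool" where
  "is_code n R E D \<longleftrightarrow>
     (\<forall>i\<ge>1. R i \<ge> 0 \<and>
        (\<forall>u. length u = n \<longrightarrow> D i u \<in> msgs n (R i)) \<and>
        (\<forall>m\<in>msgs n (R i). \<forall>u. length u = n \<longrightarrow>
            length (E i m u) = n \<and> D i (E i m u) = m))"

definition valid_msg_seq :: "nat \<Rightarrow> (nat \<Rightarrow> real) \<Rightarrow> (nat \<Rightarrow> nat) \<Rightarrow> bool" where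
  "valid_msg_seq n R ms \<longleftrightarrow> (\<forall>i\<ge>1. ms i \<in> msgs n (R i))"

definition constrained_code :: "nat \<Rightarrow> nat \<Rightarrow> nat \<Rightarrow> nat \<Rightarrow> (nat \<Rightarrow> real)
    \<Rightarrow> (nat \<Rightarrow> nat \<Rightarrow> bool list \<Rightarrow> bool list) \<Rightarrow> (nat \<Rightarrow> bool list \<Rightarrow> nat) \<Rightarrow> bool" where
  "constrained_code n \<alpha> \<beta> p R E D \<longleftrightarrow> is_code n R E D \<and>
     (\<forall>ms. valid_msg_seq n R ms \<longrightarrow>
        (\<forall>i j. j + \<beta> \<le> n \<longrightarrow>
           card {(k, l). k < \<alpha> \<and> l < \<beta> \<and>
             states n E ms (i + k) ! (j + l) \<noteq> states n E ms (i + k + 1) ! (j + l)} \<le> p))"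

definition code_has_rate :: "(nat \<Rightarrow> real) \<Rightarrow> real \<Rightarrow> bool" where
  "code_has_rate R r \<longleftrightarrow> (\<lambda>m. (\<Sum>i=1..m. R i) / real m) \<longlonglongrightarrow> r"

definition cap_n :: "nat \<Rightarrow> nat \<Rightarrow> nat \<Rightarrow> nat \<Rightarrow> real" where
  "cap_n n \<alpha> \<beta> p = Sup {r. \<exists>R E D. constrained_code n \<alpha> \<beta> p R E D \<and> code_has_rate R r}"

definition is_array :: "nat \<Rightarrow> nat \<Rightarrow> nat \<Rightarrow> nat \<Rightarrow> nat \<Rightarrow> (nat \<Rightarrow> nat \<Rightarrow> bool) \<Rightarrow> bool" where
  "is_array m n a b p A \<longleftrightarrow>
     (\<forall>i j. (m \<le> i \<or> n \<le> j) \<longrightarrow> \<not> A i j) \<and>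
     (\<forall>i j. i + a \<le> m \<and> j + b \<le> n \<longrightarrow>
        card {(k, l). k < a \<and> l < b \<and> A (i + k) (j + l)} \<le> p)"

definition num_arrays :: "nat \<Rightarrow> nat \<Rightarrow> nat \<Rightarrow> nat \<Rightarrow> nat \<Rightarrow> nat" where
  "num_arrays m n a b p = card {A. is_array m n a b p A}"

end

theory Submission
  imports Defs
begin

text \<open>Record the rewrites of the first \<open>m\<close> writes of an \<open>(\<alpha>,\<beta>,p)\<close>-constrained code on \<open>n\<close> cells
  as an \<open>m \<times> n\<close> array whose entry \<open>(k,l)\<close> says whether cell \<open>l\<close> changes in write \<open>k+1\<close>. The constraint
  makes this an \<open>(\<alpha>,\<beta>,p)\<close>-array, and since the states (hence the decoded messages) can be replayed
  from it, distinct message sequences give distinct arrays. Hence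
  \<open>\<Prod>i=1..m. 2\<^bsup>nR\<^sub>i\<^esup>/2 \<le> c(m,n)\<close>, i.e. \<open>(R\<^sub>1+\<dots>+R\<^sub>m)/m \<le> log c(m,n)/(mn) + 1/n\<close>;
  letting \<open>m \<rightarrow> \<infinity>\<close> and then \<open>n \<rightarrow> \<infinity>\<close> gives the theorem.\<close>

lemma one_mem_msgs:
  assumes "0 \<le> r"
  shows "1 \<in> msgs n r"
proof -
  have "1 \<le> 2 powr (real n * r)" using assms by (simp add: ge_one_powr_ge_zero)
  then have "1 \<le> nat \<lfloor>2 powr (real n * r)\<rfloor>" by linarith
  then show ?thesis unfolding msgs_def by simp
qed

lemma card_msgs_ge:
  assumes "0 \<le> r"
  shows "2 powr (real n * r) / 2 \<le> real (card (msgs n r))"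
proof -
  let ?x = "2 powr (real n * r)"
  have "1 \<le> ?x" using assms by (simp add: ge_one_powr_ge_zero)
  then have "real (card (msgs n r)) = real_of_int \<lfloor>?x\<rfloor>"
    unfolding msgs_def by (simp add: of_nat_nat)
  moreover have "?x - 1 < real_of_int \<lfloor>?x\<rfloor>" and "1 \<le> \<lfloor>?x\<rfloor>"
    using \<open>1 \<le> ?x\<close> by linarith+
  ultimately show ?thesis by linarith
qed

lemma finite_arrays: "finite {A. is_array m n a b p A}"
proof (rule finite_subset)
  show "{A. is_array m n a b p A} \<subseteq> (\<lambda>S i j. (i, j) \<in> S) ` Pow ({..<m} \<times> {..<n})"
  proof
    fix A assume "A \<in> {A. is_array m n a b p A}"
    then have "A = (\<lambda>i j. (i, j) \<in> {(i, j). A i j \<and> i < m \<and> j < n})"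
      unfolding is_array_def by (auto simp: fun_eq_iff) (meson not_le)+
    then show "A \<in> (\<lambda>S i j. (i, j) \<in> S) ` Pow ({..<m} \<times> {..<n})" by blast
  qed
qed simp

lemma length_states:
  assumes "is_code n R E D" and "valid_msg_seq n R ms"
  shows "length (states n E ms k) = n"
proof (induction k)
  case (Suc k)
  have "ms (Suc k) \<in> msgs n (R (Suc k))" using assms(2) unfolding valid_msg_seq_def by simp
  with assms(1) Suc show ?case unfolding is_code_def by simp
qed simp

lemma decode_states:
  assumes "is_code n R E D" and "valid_msg_seq n R ms" and "1 \<le> i"
  shows "D i (states n E ms i) = ms i"
proof -
  obtain k where k: "i = Suc k" using assms(3) by (cases i) auto
  have "ms i \<in> msgs n (R i)" using assms(2,3) unfolding valid_msg_seq_def by simp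
  with assms(1) length_states[OF assms(1,2), of k] k show ?thesis unfolding is_code_def by simp
qed

definition rewrite_array ::
    "nat \<Rightarrow> (nat \<Rightarrow> nat \<Rightarrow> bool list \<Rightarrow> bool list) \<Rightarrow> (nat \<Rightarrow> nat) \<Rightarrow> nat \<Rightarrow> nat \<Rightarrow> nat \<Rightarrow> bool" where
  "rewrite_array n E ms m k l \<longleftrightarrow>
     k < m \<and> l < n \<and> states n E ms k ! l \<noteq> states n E ms (Suc k) ! l"

lemma rewrite_array_is_array:
  assumes "constrained_code n \<alpha> \<beta> p R E D" and "valid_msg_seq n R ms"
  shows "is_array m n \<alpha> \<beta> p (rewrite_array n E ms m)"
  unfolding is_array_def
proof safe
  fix i j assume window: "i + \<alpha> \<le> m" "j + \<beta> \<le> n"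
  then have "{(k, l). k < \<alpha> \<and> l < \<beta> \<and> rewrite_array n E ms m (i + k) (j + l)} =
      {(k, l). k < \<alpha> \<and> l < \<beta> \<and> states n E ms (i + k) ! (j + l) \<noteq> states n E ms (i + k + 1) ! (j + l)}"
    unfolding rewrite_array_def by auto
  with assms window(2)
  show "card {(k, l). k < \<alpha> \<and> l < \<beta> \<and> rewrite_array n E ms m (i + k) (j + l)} \<le> p"
    unfolding constrained_code_def by simp
qed (simp_all add: rewrite_array_def)

lemma states_eq_if_rewrite_array_eq:
  assumes "is_code n R E D" and "valid_msg_seq n R ms" and "valid_msg_seq n R ms'"
    and "rewrite_array n E ms m = rewrite_array n E ms' m" and "k \<le> m"
  shows "states n E ms k = states n E ms' k"
  using \<open>k \<le> m\<close>
proof (induction k)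
  case (Suc k)
  then have IH: "states n E ms k = states n E ms' k" by simp
  show ?case
  proof (rule nth_equalityI)
    show "length (states n E ms (Suc k)) = length (states n E ms' (Suc k))"
      using length_states assms(1-3) by metis
  next
    fix l assume "l < length (states n E ms (Suc k))"
    then have "l < n" using length_states[OF assms(1,2)] by metis
    moreover have "rewrite_array n E ms m k l = rewrite_array n E ms' m k l" using assms(4) by simp
    ultimately show "states n E ms (Suc k) ! l = states n E ms' (Suc k) ! l"
      using Suc.prems IH unfolding rewrite_array_def by auto
  qed
qed simp

lemma prod_card_msgs_le_num_arrays:
  assumes code: "constrained_code n \<alpha> \<beta> p R E D"
  shows "(\<Prod>i=1..m. card (msgs n (R i))) \<le> num_arrays m n \<alpha> \<beta> p"
proof -
  have is_code: "is_code n R E D" using code unfolding constrained_code_def by blast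
  let ?P = "Pi\<^sub>E {1..m} (\<lambda>i. msgs n (R i))"
  \<comment> \<open>Extend a message tuple by the message \<open>1\<close>, which exists at every rate.\<close>
  define ext where "ext ms i = (if i \<in> {1..m} then ms i else 1)" for ms :: "nat \<Rightarrow> nat" and i
  define arr where "arr ms = rewrite_array n E (ext ms) m" for ms
  have valid: "valid_msg_seq n R (ext ms)" if "ms \<in> ?P" for ms
    using that one_mem_msgs is_code unfolding valid_msg_seq_def ext_def is_code_def by auto
  have "inj_on arr ?P"
  proof (rule inj_onI)
    fix ms ms' assume ms: "ms \<in> ?P" and ms': "ms' \<in> ?P" and "arr ms = arr ms'"
    then have "states n E (ext ms) i = states n E (ext ms') i" if "i \<le> m" for i
      using states_eq_if_rewrite_array_eq[OF is_code valid valid] that unfolding arr_def by blast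
    then have "ext ms i = ext ms' i" if "i \<in> {1..m}" for i
      using that decode_states[OF is_code valid[OF ms]] decode_states[OF is_code valid[OF ms']]
      by (metis atLeastAtMost_iff)
    then show "ms = ms'"
      by (intro PiE_ext[OF ms ms']) (simp add: ext_def)
  qed
  moreover have "arr ` ?P \<subseteq> {A. is_array m n \<alpha> \<beta> p A}"
    using rewrite_array_is_array[OF code valid] unfolding arr_def by blast
  ultimately have "card ?P \<le> card {A. is_array m n \<alpha> \<beta> p A}"
    by (rule card_inj_on_le[OF _ _ finite_arrays])
  then show ?thesis unfolding num_arrays_def by (simp add: card_PiE)
qed

lemma rate_sum_le_log_num_arrays:
  assumes code: "constrained_code n \<alpha> \<beta> p R E D"
  shows "real n * (\<Sum>i=1..m. R i) - real m \<le> log 2 (real (num_arrays m n \<alpha> \<beta> p))"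
proof -
  have rate_nonneg: "\<And>i. 1 \<le> i \<Longrightarrow> 0 \<le> R i"
    using code unfolding constrained_code_def is_code_def by blast
  let ?lhs = "real n * (\<Sum>i=1..m. R i) - real m"
  have "2 powr ?lhs = 2 powr (\<Sum>i=1..m. real n * R i - 1)"
    by (simp add: sum_subtractf sum_distrib_left)
  also have "\<dots> = (\<Prod>i=1..m. 2 powr (real n * R i) / 2)"
    by (simp add: powr_sum powr_diff)
  also have "\<dots> \<le> (\<Prod>i=1..m. real (card (msgs n (R i))))"
    by (rule prod_mono) (use rate_nonneg card_msgs_ge in auto)
  also have "\<dots> \<le> real (num_arrays m n \<alpha> \<beta> p)"
    using prod_card_msgs_le_num_arrays[OF code, of m] by (metis of_nat_le_iff of_nat_prod)
  finally have le: "2 powr ?lhs \<le> real (num_arrays m n \<alpha> \<beta> p)" .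
  moreover have "0 < 2 powr ?lhs" by simp
  ultimately have "log 2 (2 powr ?lhs) \<le> log 2 (real (num_arrays m n \<alpha> \<beta> p))"
    by (subst log_le_cancel_iff) linarith+
  then show ?thesis by simp
qed

lemma average_rate_le:
  assumes "constrained_code n \<alpha> \<beta> p R E D" and "0 < n" and "0 < m"
  shows "(\<Sum>i=1..m. R i) / real m
           \<le> log 2 (real (num_arrays m n \<alpha> \<beta> p)) / (real m * real n) + 1 / real n"
proof -
  have "real n * (\<Sum>i=1..m. R i) \<le> log 2 (real (num_arrays m n \<alpha> \<beta> p)) + real m"
    using rate_sum_le_log_num_arrays[OF assms(1), of m] by simp
  with assms(2,3) show ?thesis by (simp add: field_simps)
qed

lemma constrained_code_zero_rate:
  "constrained_code n \<alpha> \<beta> p (\<lambda>i. 0) (\<lambda>i m u. u) (\<lambda>i u. 1) \<and> code_has_rate (\<lambda>i. 0) 0"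
proof -
  have "states n (\<lambda>i m u. u) ms k = replicate n False" for ms k by (induction k) auto
  moreover have "msgs n 0 = {1}" unfolding msgs_def by simp
  ultimately show ?thesis
    unfolding constrained_code_def is_code_def code_has_rate_def by auto
qed

lemma cap_n_le:
  assumes "0 < n"
    and bound: "\<And>m. N \<le> m \<Longrightarrow> log 2 (real (num_arrays m n \<alpha> \<beta> p)) / (real m * real n) \<le> c"
  shows "cap_n n \<alpha> \<beta> p \<le> c + 1 / real n"
  unfolding cap_n_def
proof (rule cSup_least)
  show "{r. \<exists>R E D. constrained_code n \<alpha> \<beta> p R E D \<and> code_has_rate R r} \<noteq> {}"
    using constrained_code_zero_rate by blast
next
  fix r assume "r \<in> {r. \<exists>R E D. constrained_code n \<alpha> \<beta> p R E D \<and> code_has_rate R r}"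
  then obtain R E D where code: "constrained_code n \<alpha> \<beta> p R E D" and rate: "code_has_rate R r"
    by blast
  have "(\<Sum>i=1..m. R i) / real m \<le> c + 1 / real n" if "max N 1 \<le> m" for m
    using average_rate_le[OF code \<open>0 < n\<close>, of m] bound[of m] that by simp
  then show "r \<le> c + 1 / real n"
    using rate unfolding code_has_rate_def by (intro LIMSEQ_le_const2) blast+
qed

theorem theorem1:
  fixes \<alpha> \<beta> p :: nat and C C2D :: real
  assumes "0 < \<alpha>" and "0 < \<beta>" and "0 < p"
    and "(\<lambda>n. cap_n n \<alpha> \<beta> p) \<longlonglongrightarrow> C"
    and "((\<lambda>(m, n). log 2 (real (num_arrays m n \<alpha> \<beta> p)) / (real m * real n))
           \<longlongrightarrow> C2D) (sequentially \<times>\<^sub>F sequentially)"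
  shows "C \<le> C2D"
proof (rule field_le_epsilon)
  fix e :: real assume "0 < e"
  let ?f = "\<lambda>(m, n). log 2 (real (num_arrays m n \<alpha> \<beta> p)) / (real m * real n)"
  have "\<forall>\<^sub>F x in sequentially \<times>\<^sub>F sequentially. ?f x < C2D + e"
    using order_tendstoD(2)[OF assms(5)] \<open>0 < e\<close> by simp
  then obtain N where N: "\<And>m n. N \<le> m \<Longrightarrow> N \<le> n \<Longrightarrow> ?f (m, n) < C2D + e"
    unfolding eventually_prod_sequentially by blast
  have "cap_n n \<alpha> \<beta> p \<le> C2D + e + 1 / real n" if "max N 1 \<le> n" for n
    using that N by (intro cap_n_le) (auto intro: less_imp_le)
  moreover have "(\<lambda>n. C2D + e + 1 / real n) \<longlonglongrightarrow> C2D + e"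
    using tendsto_add[OF tendsto_const lim_1_over_n] by simp
  ultimately show "C \<le> C2D + e"
    using assms(4) by (intro LIMSEQ_le) blast+
qed

end
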